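(* Let $N\ge 2$ be an integer and let $f_1,f_2$ be non-negative integers such that the map $f:\{0,1,\ldots,N-1\}\to\{0,1,\ldots,N-1\}$, $f(x)=(f_1x+f_2x^2) \bmod N$, is a permutation of $\{0,1,\ldots,N-1\}$. Then the interleaver $f$ is maximum contention-free.
   Context: An interleaver of length $N$ is a permutation $f$ of $\{0,1,\ldots,N-1\}$; let $g=f^{-1}$ denote its inverse (the deinterleaver). For a positive integer $W$ dividing $N$, put $M=N/W$. The interleaver $f$ is called contention-free for window size $W$ if for both $\pi=f$ and $\pi=g$ we have $\lfloor \pi(j+tW)/W\rfloor \neq \lfloor \pi(j+vW)/W\rfloor$ for all integers $j,t,v$ with $0\le j<W$ and $0\le t<v<M$. The interleaver is called maximum contention-free if it is contention-free for every window size $W$ that is a positive divisor of $N$. Here $a \bmod N$ denotes the representative of $a$ modulo $N$ in $\{0,\ldots,N-1\}$. *)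

theory Defs
  imports Main
begin

definition is_interleaver :: "nat \<Rightarrow> (nat \<Rightarrow> nat) \<Rightarrow> bool" where
  "is_interleaver N f \<longleftrightarrow> bij_betw f {0..<N} {0..<N}"

definition deinterleaver :: "nat \<Rightarrow> (nat \<Rightarrow> nat) \<Rightarrow> (nat \<Rightarrow> nat)" where
  "deinterleaver N f = inv_into {0..<N} f"

definition window_cf :: "nat \<Rightarrow> nat \<Rightarrow> (nat \<Rightarrow> nat) \<Rightarrow> bool" where
  "window_cf N W pi \<longleftrightarrow>
     (\<forall>j t v. j < W \<longrightarrow> t < v \<longrightarrow> v < N div W \<longrightarrow>
        pi (j + t * W) div W \<noteq> pi (j + v * W) div W)"

definition contention_free :: "nat \<Rightarrow> (nat \<Rightarrow> nat) \<Rightarrow> nat \<Rightarrow> bool" where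
  "contention_free N f W \<longleftrightarrow>
     window_cf N W f \<and> window_cf N W (deinterleaver N f)"

definition maximum_contention_free :: "nat \<Rightarrow> (nat \<Rightarrow> nat) \<Rightarrow> bool" where
  "maximum_contention_free N f \<longleftrightarrow>
     (\<forall>W. 0 < W \<longrightarrow> W dvd N \<longrightarrow> contention_free N f W)"

end

theory Submission
  imports Defs
begin

text \<open>Since W divides N, the residue of f x modulo W depends only on the residue of x modulo W.
  So f induces a map on residues modulo W, which is onto (f is onto) and hence a permutation.
  Consequently both f and its inverse map inputs that are congruent modulo W to outputs that are
  congruent modulo W. In a window, the inputs j + t W (for fixed j) are pairwise congruent and
  distinct, so their images are congruent and distinct, hence lie in distinct windows.\<close>

definition respects_mod :: "nat \<Rightarrow> nat set \<Rightarrow> (nat \<Rightarrow> nat) \<Rightarrow> bool" where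
  "respects_mod W A \<pi> \<longleftrightarrow>
     (\<forall>x\<in>A. \<forall>y\<in>A. x mod W = y mod W \<longrightarrow> \<pi> x mod W = \<pi> y mod W)"

lemma respects_modD:
  "respects_mod W A \<pi> \<Longrightarrow> x \<in> A \<Longrightarrow> y \<in> A \<Longrightarrow> x mod W = y mod W \<Longrightarrow> \<pi> x mod W = \<pi> y mod W"
  unfolding respects_mod_def by blast

lemma window_index_less:
  fixes j t W N :: nat
  assumes "j < W" "t < N div W" "W dvd N"
  shows "j + t * W < N"
proof -
  have "Suc t * W \<le> N div W * W" using assms(2) by (intro mult_le_mono1) simp
  also have "\<dots> = N" using assms(3) by simp
  finally show ?thesis using assms(1) by simp
qed

lemma window_cf_if_inj_on_respects_mod:
  assumes inj: "inj_on \<pi> {0..<N}" and resp: "respects_mod W {0..<N} \<pi>" and "W dvd N"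
  shows "window_cf N W \<pi>"
  unfolding window_cf_def
proof (intro allI impI notI)
  fix j t v :: nat
  assume j: "j < W" and tv: "t < v" and v: "v < N div W"
    and same_window: "\<pi> (j + t * W) div W = \<pi> (j + v * W) div W"
  have in_range: "j + t * W < N" "j + v * W < N"
    using window_index_less[OF j _ \<open>W dvd N\<close>] tv v by simp_all
  have same_residue: "\<pi> (j + t * W) mod W = \<pi> (j + v * W) mod W"
    by (rule respects_modD[OF resp]) (use in_range in simp_all)
  have "\<pi> (j + t * W) = \<pi> (j + v * W)"
    using div_mult_mod_eq[of "\<pi> (j + t * W)" W] div_mult_mod_eq[of "\<pi> (j + v * W)" W]
    unfolding same_window same_residue by simp
  with inj in_range have "j + t * W = j + v * W" by (simp add: inj_on_eq_iff)
  with tv j show False by simp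
qed

lemma respects_mod_quadratic:
  fixes f1 f2 W N :: nat
  assumes "W dvd N"
  shows "respects_mod W A (\<lambda>x. (f1 * x + f2 * x^2) mod N)"
proof -
  have residue: "(f1 * x + f2 * x^2) mod W = (f1 * (x mod W) + f2 * (x mod W)^2) mod W"
    for x :: nat
    by (metis mod_add_cong mod_mult_right_eq power_mod)
  show ?thesis unfolding respects_mod_def
  proof (intro ballI impI)
    fix x y :: nat assume "x mod W = y mod W"
    then show "(f1 * x + f2 * x^2) mod N mod W = (f1 * y + f2 * y^2) mod N mod W"
      using residue[of x] residue[of y] assms by (simp add: mod_mod_cancel)
  qed
qed

text \<open>The residue map r \<mapsto> \<pi> r mod W on {0..<W} is onto because \<pi> is, so it is injective.\<close>

lemma bij_respects_mod_reflects_mod: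
  assumes bij: "bij_betw \<pi> {0..<N} {0..<N}" and resp: "respects_mod W {0..<N} \<pi>"
    and "W dvd N" and "x < N" "y < N" and "\<pi> x mod W = \<pi> y mod W"
  shows "x mod W = y mod W"
proof -
  define h where "h r = \<pi> r mod W" for r
  have "0 < W" using \<open>W dvd N\<close> \<open>x < N\<close> by (cases W) auto
  have "W \<le> N" using \<open>W dvd N\<close> \<open>x < N\<close> by (simp add: dvd_imp_le)
  have h_residue: "\<pi> z mod W = h (z mod W)" if "z < N" for z
  proof -
    have "z mod W < N" using \<open>0 < W\<close> \<open>W \<le> N\<close> by (meson less_le_trans mod_less_divisor)
    then show ?thesis unfolding h_def using that by (intro respects_modD[OF resp]) simp_all
  qed
  have "{0..<W} \<subseteq> h ` {0..<W}"
  proof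
    fix r assume r: "r \<in> {0..<W}"
    then have "r \<in> \<pi> ` {0..<N}" using bij \<open>W \<le> N\<close> by (auto simp: bij_betw_def)
    then obtain a where "a < N" "\<pi> a = r" by auto
    then have "h (a mod W) = r" using h_residue[OF \<open>a < N\<close>] r by simp
    then show "r \<in> h ` {0..<W}" using \<open>0 < W\<close> by force
  qed
  then have "inj_on h {0..<W}" by (simp add: finite_surj_inj)
  moreover have "h (x mod W) = h (y mod W)"
    using h_residue \<open>x < N\<close> \<open>y < N\<close> assms(6) by simp
  ultimately show ?thesis using \<open>0 < W\<close> by (simp add: inj_on_eq_iff)
qed

lemma respects_mod_inv_into:
  assumes bij: "bij_betw \<pi> {0..<N} {0..<N}" and resp: "respects_mod W {0..<N} \<pi>"
    and "W dvd N"
  shows "respects_mod W {0..<N} (inv_into {0..<N} \<pi>)"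
  unfolding respects_mod_def
proof (intro ballI impI)
  fix a b assume ab: "a \<in> {0..<N}" "b \<in> {0..<N}" and "a mod W = b mod W"
  let ?x = "inv_into {0..<N} \<pi> a" and ?y = "inv_into {0..<N} \<pi> b"
  have "?x < N" "?y < N" using bij ab by (metis atLeastLessThan_iff bij_betw_def inv_into_into)+
  moreover have "\<pi> ?x mod W = \<pi> ?y mod W"
    using bij ab \<open>a mod W = b mod W\<close> by (simp add: bij_betw_inv_into_right)
  ultimately show "?x mod W = ?y mod W"
    using bij_respects_mod_reflects_mod[OF bij resp \<open>W dvd N\<close>] by blast
qed

theorem theorem1:
  fixes N f1 f2 :: nat
  assumes "N \<ge> 2"
    and "is_interleaver N (\<lambda>x. (f1 * x + f2 * x^2) mod N)"
  shows "maximum_contention_free N (\<lambda>x. (f1 * x + f2 * x^2) mod N)"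
  unfolding maximum_contention_free_def contention_free_def deinterleaver_def
proof (intro allI impI conjI)
  fix W :: nat
  assume "0 < W" "W dvd N"
  define f where "f x = (f1 * x + f2 * x^2) mod N" for x
  have bij: "bij_betw f {0..<N} {0..<N}"
    using assms(2) unfolding is_interleaver_def f_def .
  have resp: "respects_mod W {0..<N} f"
    unfolding f_def using respects_mod_quadratic[OF \<open>W dvd N\<close>] .
  show "window_cf N W f"
    using bij resp \<open>W dvd N\<close> by (simp add: bij_betw_def window_cf_if_inj_on_respects_mod)
  show "window_cf N W (inv_into {0..<N} f)"
    using bij_betw_inv_into[OF bij] respects_mod_inv_into[OF bij resp \<open>W dvd N\<close>] \<open>W dvd N\<close>
    by (simp add: bij_betw_def window_cf_if_inj_on_respects_mod)
qed

end
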